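(* For all positive integers $m,n$, $$\sum_{\substack{w\in W_n\\ |w|\in[m]^n}}t^{\mathrm{bars}(w)}=\sum_{k=0}^{n-1}\binom{n-1}{k}t^k\sum_{u\in[m]^{n-k}}t^{\mathrm{des}(u)}.$$
   Context: A barred word of length $n$ over $\mathbb P$ is a word $w_1\cdots w_n$ of positive integers in which some letters carry a bar; $|w_i|$ is the letter without its bar, $|w|=|w_1|\cdots|w_n|$, and $\mathrm{bars}(w)$ is the number of barred letters. $W_n$ (banners) is the set of barred words of length $n$ such that (1) $w_n$ is unbarred, (2) for $i\in[n-1]$, if $|w_i|<|w_{i+1}|$ then $w_i$ is unbarred, (3) for $i\in[n-1]$, if $|w_i|>|w_{i+1}|$ then $w_i$ is barred. For a word $u$, $\mathrm{des}(u)=|\{i:u_i>u_{i+1}\}|$. $[m]=\{1,\dots,m\}$. *)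

theory Defs
  imports Main
begin

text \<open>A barred word is a list of pairs (letter, barred flag); letters are positive integers.\<close>
type_synonym bword = "(nat \<times> bool) list"

definition unbar :: "bword \<Rightarrow> nat list" where
  "unbar w = map fst w"

definition bars :: "bword \<Rightarrow> nat" where
  "bars w = length (filter snd w)"

definition banners :: "nat \<Rightarrow> bword set" where
  "banners n = {w. length w = n \<and> (\<forall>i<n. fst (w ! i) \<ge> 1)
      \<and> (n > 0 \<longrightarrow> \<not> snd (w ! (n - 1)))
      \<and> (\<forall>i. i + 1 < n \<longrightarrow> fst (w ! i) < fst (w ! (i + 1)) \<longrightarrow> \<not> snd (w ! i))
      \<and> (\<forall>i. i + 1 < n \<longrightarrow> fst (w ! i) > fst (w ! (i + 1)) \<longrightarrow> snd (w ! i))}"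

definition des :: "nat list \<Rightarrow> nat" where
  "des u = card {i. i + 1 < length u \<and> u ! i > u ! (i + 1)}"

definition words :: "nat \<Rightarrow> nat \<Rightarrow> nat list set" where
  "words m n = {u. length u = n \<and> set u \<subseteq> {1..m}}"

end

theory Submission
  imports Defs
begin

text \<open>
  Proof idea: a transfer-matrix argument. Let \<open>B\<^sub>n(a)\<close> be the bar generating function of
  banners of length \<open>n + 1\<close> over \<open>[m]\<close> starting with the letter \<open>a\<close>, and \<open>D\<^sub>n(a)\<close> the descent
  generating function of words of length \<open>n + 1\<close> over \<open>[m]\<close> starting with \<open>a\<close>. Removing the
  first letter shows \<open>D\<^sub>n\<^sub>+\<^sub>1 = M D\<^sub>n\<close>, where \<open>M a b = t\<close> for a descent \<open>b < a\<close> and \<open>1\<close> otherwise,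
  while \<open>B\<^sub>n\<^sub>+\<^sub>1 = (t I + M) B\<^sub>n\<close>: the bar of the first letter is forced except before a
  repeated letter, where both states are allowed, giving the extra diagonal \<open>t\<close>.
  Since \<open>t I\<close> commutes with \<open>M\<close> and \<open>B\<^sub>0 = D\<^sub>0 = 1\<close>, the binomial theorem gives
  \<open>B\<^sub>n = \<Sum>\<^sub>k (n choose k) t\<^sup>k D\<^sub>n\<^sub>-\<^sub>k\<close>; summing over the first letter yields the theorem.
\<close>

lemma binomial_transfer:
  fixes B D :: "nat \<Rightarrow> 'b \<Rightarrow> 'a :: comm_ring_1" and M :: "'b \<Rightarrow> 'b \<Rightarrow> 'a"
  assumes init: "\<And>a. a \<in> A \<Longrightarrow> B 0 a = D 0 a"
    and D_step: "\<And>n a. a \<in> A \<Longrightarrow> D (Suc n) a = (\<Sum>b\<in>A. M a b * D n b)"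
    and B_step: "\<And>n a. a \<in> A \<Longrightarrow> B (Suc n) a = t * B n a + (\<Sum>b\<in>A. M a b * B n b)"
    and "a \<in> A"
  shows "B n a = (\<Sum>k\<le>n. of_nat (n choose k) * t ^ k * D (n - k) a)"
  using \<open>a \<in> A\<close>
proof (induction n arbitrary: a)
  case 0
  then show ?case by (simp add: init)
next
  case (Suc n)
  let ?c = "\<lambda>k. of_nat (n choose k) * t ^ k"
  have M_part: "(\<Sum>b\<in>A. M a b * B n b) = (\<Sum>k\<le>n. ?c k * D (Suc (n - k)) a)"
  proof -
    have "(\<Sum>b\<in>A. M a b * B n b) = (\<Sum>b\<in>A. \<Sum>k\<le>n. ?c k * (M a b * D (n - k) b))"
      by (intro sum.cong refl) (simp add: Suc.IH sum_distrib_left mult_ac)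
    also have "\<dots> = (\<Sum>k\<le>n. ?c k * (\<Sum>b\<in>A. M a b * D (n - k) b))"
      by (subst sum.swap) (simp add: sum_distrib_left)
    finally show ?thesis by (simp add: D_step Suc.prems)
  qed
  have t_part: "t * B n a = (\<Sum>k\<le>n. of_nat (n choose k) * t ^ Suc k * D (n - k) a)"
    using Suc.prems by (simp add: Suc.IH sum_distrib_left mult_ac)
  text \<open>Splitting off the \<open>k = 0\<close> term of the \<open>M\<close>-part and shifting the rest, the two parts
    combine by Pascal's rule.\<close>
  have shift: "(\<Sum>k\<le>n. ?c k * D (Suc (n - k)) a)
      = D (Suc n) a + (\<Sum>k\<le>n. of_nat (n choose Suc k) * t ^ Suc k * D (n - k) a)"
  proof -
    have "(\<Sum>k\<le>n. ?c k * D (Suc (n - k)) a) = (\<Sum>k\<le>Suc n. ?c k * D (Suc n - k) a)"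
      by (simp add: Suc_diff_le sum.atMost_Suc binomial_eq_0)
    also have "\<dots> = D (Suc n) a + (\<Sum>k\<le>n. of_nat (n choose Suc k) * t ^ Suc k * D (n - k) a)"
      by (subst sum.atMost_Suc_shift) (simp add: sum.atMost_Suc)
    finally show ?thesis .
  qed
  have "B (Suc n) a = t * B n a + (\<Sum>b\<in>A. M a b * B n b)"
    using Suc.prems by (rule B_step)
  also have "\<dots> = D (Suc n) a + (\<Sum>k\<le>n. of_nat (n choose k) * t ^ Suc k * D (n - k) a)
        + (\<Sum>k\<le>n. of_nat (n choose Suc k) * t ^ Suc k * D (n - k) a)"
    unfolding t_part M_part shift by (simp add: algebra_simps)
  also have "\<dots> = (\<Sum>k\<le>Suc n. of_nat (Suc n choose k) * t ^ k * D (Suc n - k) a)"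
    by (subst sum.atMost_Suc_shift) (simp add: distrib_left distrib_right sum.distrib)
  finally show ?case .
qed

definition allowed_bars :: "nat \<Rightarrow> nat \<Rightarrow> bool set" where
  "allowed_bars a b = {\<beta>. (a < b \<longrightarrow> \<not> \<beta>) \<and> (b < a \<longrightarrow> \<beta>)}"

definition bar_compatible :: "nat \<times> bool \<Rightarrow> nat \<times> bool \<Rightarrow> bool" where
  "bar_compatible x y \<longleftrightarrow> snd x \<in> allowed_bars (fst x) (fst y)"

lemma banners_iff:
  "w \<in> banners n \<longleftrightarrow> length w = n \<and> (\<forall>x\<in>set w. 1 \<le> fst x)
     \<and> (w \<noteq> [] \<longrightarrow> \<not> snd (last w)) \<and> successively bar_compatible w"
  unfolding banners_def successively_conv_nth bar_compatible_def allowed_bars_def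
  by (auto simp: all_set_conv_all_nth last_conv_nth)

lemma banners_Cons_Cons:
  "x # y # ws \<in> banners (Suc n) \<longleftrightarrow> 1 \<le> fst x \<and> bar_compatible x y \<and> y # ws \<in> banners n"
  by (auto simp: banners_iff)

lemma bars_Cons: "bars (x # w) = (if snd x then 1 else 0) + bars w"
  by (simp add: bars_def)

lemma des_single: "des [x] = 0"
  by (simp add: des_def)

lemma des_Cons_Cons: "des (x # y # ys) = (if y < x then 1 else 0) + des (y # ys)"
proof -
  let ?D = "\<lambda>u. {i. i + 1 < length u \<and> u ! i > u ! (i + 1)}"
  have "?D (x # y # ys) = (if y < x then {0} else {}) \<union> Suc ` ?D (y # ys)"
  proof (rule set_eqI)
    fix i show "i \<in> ?D (x # y # ys) \<longleftrightarrow> i \<in> (if y < x then {0} else {}) \<union> Suc ` ?D (y # ys)"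
      by (cases i) auto
  qed
  then show ?thesis unfolding des_def by (simp add: card_image)
qed

definition descent_weight :: "'a :: comm_ring_1 \<Rightarrow> nat \<Rightarrow> nat \<Rightarrow> 'a" where
  "descent_weight t a b = (if b < a then t else 1)"

lemma sum_allowed_bars:
  "(\<Sum>\<beta>\<in>allowed_bars a b. if \<beta> then t else 1) = descent_weight t a b + (if b = a then t else 0)"
proof -
  have "allowed_bars a b = (if a < b then {False} else if b < a then {True} else {False, True})"
    by (auto simp: allowed_bars_def)
  then show ?thesis by (simp add: descent_weight_def)
qed

definition banner_set :: "nat \<Rightarrow> nat \<Rightarrow> bword set" where
  "banner_set m n = {w \<in> banners n. set (unbar w) \<subseteq> {1..m}}"

definition banners_from :: "nat \<Rightarrow> nat \<Rightarrow> nat \<Rightarrow> bword set" where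
  "banners_from m n a = {w \<in> banner_set m (Suc n). fst (hd w) = a}"

definition words_from :: "nat \<Rightarrow> nat \<Rightarrow> nat \<Rightarrow> nat list set" where
  "words_from m n a = {u \<in> words m (Suc n). hd u = a}"

lemma finite_banner_set: "finite (banner_set m n)"
proof (rule finite_subset)
  show "banner_set m n \<subseteq> {w. set w \<subseteq> {1..m} \<times> UNIV \<and> length w = n}"
    by (auto simp: banner_set_def banners_def unbar_def)
qed (simp add: finite_lists_length_eq)

lemma finite_words: "finite (words m n)"
  unfolding words_def conj_commute[of "length _ = n"] by (simp add: finite_lists_length_eq)

lemma sum_banner_set_by_first:
  "(\<Sum>w\<in>banner_set m (Suc n). f w) = (\<Sum>a=1..m. \<Sum>w\<in>banners_from m n a. f w)"
  unfolding banners_from_def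
proof (rule sum.group[symmetric])
  show "(\<lambda>w. fst (hd w)) ` banner_set m (Suc n) \<subseteq> {1..m}"
    by (auto simp: banner_set_def banners_def unbar_def hd_conv_nth length_Suc_conv)
qed (simp_all add: finite_banner_set)

lemma sum_words_by_first:
  "(\<Sum>u\<in>words m (Suc n). f u) = (\<Sum>a=1..m. \<Sum>u\<in>words_from m n a. f u)"
  unfolding words_from_def
proof (rule sum.group[symmetric])
  show "hd ` words m (Suc n) \<subseteq> {1..m}"
    by (auto simp: words_def length_Suc_conv)
qed (simp_all add: finite_words)

text \<open>The generating functions \<open>B\<^sub>n(a)\<close> and \<open>D\<^sub>n(a)\<close> of the proof idea.\<close>
definition banner_gf :: "'a :: comm_ring_1 \<Rightarrow> nat \<Rightarrow> nat \<Rightarrow> nat \<Rightarrow> 'a" where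
  "banner_gf t m n a = (\<Sum>w\<in>banners_from m n a. t ^ bars w)"

definition descent_gf :: "'a :: comm_ring_1 \<Rightarrow> nat \<Rightarrow> nat \<Rightarrow> nat \<Rightarrow> 'a" where
  "descent_gf t m n a = (\<Sum>u\<in>words_from m n a. t ^ des u)"

lemma banners_from_0: "a \<in> {1..m} \<Longrightarrow> banners_from m 0 a = {[(a, False)]}"
  by (auto simp: banners_from_def banner_set_def banners_def unbar_def length_Suc_conv)

lemma words_from_0: "a \<in> {1..m} \<Longrightarrow> words_from m 0 a = {[a]}"
  by (auto simp: words_from_def words_def length_Suc_conv)

lemma banner_gf_0: "a \<in> {1..m} \<Longrightarrow> banner_gf t m 0 a = 1"
  by (simp add: banner_gf_def banners_from_0 bars_def)

lemma descent_gf_0: "a \<in> {1..m} \<Longrightarrow> descent_gf t m 0 a = 1"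
  by (simp add: descent_gf_def words_from_0 des_single)

lemma banners_from_Suc:
  assumes "a \<in> {1..m}"
  shows "banners_from m (Suc n) a
    = (\<lambda>(w, \<beta>). (a, \<beta>) # w) ` (SIGMA w:banner_set m (Suc n). allowed_bars a (fst (hd w)))"
proof (intro equalityI subsetI)
  fix v assume v: "v \<in> banners_from m (Suc n) a"
  then have "length v = Suc (Suc n)"
    by (simp add: banners_from_def banner_set_def banners_iff)
  then obtain x y ws where v_eq: "v = x # y # ws"
    by (auto simp: length_Suc_conv)
  with v have "y # ws \<in> banner_set m (Suc n)" and "snd x \<in> allowed_bars a (fst y)"
      and "x = (a, snd x)"
    by (auto simp: banners_from_def banner_set_def banners_Cons_Cons bar_compatible_def unbar_def)
  then show "v \<in> (\<lambda>(w, \<beta>). (a, \<beta>) # w) ` (SIGMA w:banner_set m (Suc n). allowed_bars a (fst (hd w)))"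
    unfolding v_eq by (intro image_eqI[where x = "(y # ws, snd x)"]) auto
next
  fix v assume "v \<in> (\<lambda>(w, \<beta>). (a, \<beta>) # w) ` (SIGMA w:banner_set m (Suc n). allowed_bars a (fst (hd w)))"
  then obtain w \<beta> where v_eq: "v = (a, \<beta>) # w" and w: "w \<in> banner_set m (Suc n)"
      and \<beta>: "\<beta> \<in> allowed_bars a (fst (hd w))"
    by auto
  from w obtain y ws where "w = y # ws"
    by (auto simp: banner_set_def banners_iff length_Suc_conv)
  with w \<beta> assms show "v \<in> banners_from m (Suc n) a"
    unfolding v_eq
    by (auto simp: banners_from_def banner_set_def banners_Cons_Cons bar_compatible_def unbar_def)
qed

lemma words_from_Suc: "a \<in> {1..m} \<Longrightarrow> words_from m (Suc n) a = (#) a ` words m (Suc n)"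
  by (auto simp: words_from_def words_def length_Suc_conv)

text \<open>Removing the first letter \<open>a\<close>: its bar state contributes the descent weight of the
  step to the next letter, plus an extra \<open>t\<close> when that letter is again \<open>a\<close>.\<close>
lemma banner_gf_Suc:
  assumes "a \<in> {1..m}"
  shows "banner_gf t m (Suc n) a
    = t * banner_gf t m n a + (\<Sum>b=1..m. descent_weight t a b * banner_gf t m n b)"
proof -
  let ?S = "SIGMA w:banner_set m (Suc n). allowed_bars a (fst (hd w))"
  let ?c = "\<lambda>b. descent_weight t a b + (if b = a then t else 0)"
  have inj: "inj_on (\<lambda>(w, \<beta>). (a, \<beta>) # w) ?S"
    by (auto intro: inj_onI)
  have "banner_gf t m (Suc n) a = (\<Sum>(w, \<beta>)\<in>?S. t ^ bars ((a, \<beta>) # w))"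
    unfolding banner_gf_def banners_from_Suc[OF assms] by (subst sum.reindex[OF inj]) (simp add: case_prod_beta')
  also have "\<dots> = (\<Sum>w\<in>banner_set m (Suc n). \<Sum>\<beta>\<in>allowed_bars a (fst (hd w)). (if \<beta> then t else 1) * t ^ bars w)"
    by (subst sum.Sigma[symmetric]) (auto intro!: sum.cong simp: finite_banner_set bars_Cons power_add)
  also have "\<dots> = (\<Sum>w\<in>banner_set m (Suc n). ?c (fst (hd w)) * t ^ bars w)"
    by (simp add: sum_distrib_right[symmetric] sum_allowed_bars)
  also have "\<dots> = (\<Sum>b=1..m. \<Sum>w\<in>banners_from m n b. ?c b * t ^ bars w)"
    by (simp add: sum_banner_set_by_first banners_from_def)
  also have "\<dots> = (\<Sum>b=1..m. ?c b * banner_gf t m n b)"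
    by (simp add: banner_gf_def sum_distrib_left)
  also have "\<dots> = t * banner_gf t m n a + (\<Sum>b=1..m. descent_weight t a b * banner_gf t m n b)"
    using assms by (simp add: distrib_right sum.distrib if_distrib[of "\<lambda>x. x * _"] sum.delta add.commute)
  finally show ?thesis .
qed

text \<open>Removing the first letter \<open>a\<close> of a word loses one descent iff the next letter is smaller.\<close>
lemma descent_gf_Suc:
  assumes "a \<in> {1..m}"
  shows "descent_gf t m (Suc n) a = (\<Sum>b=1..m. descent_weight t a b * descent_gf t m n b)"
proof -
  have "descent_gf t m (Suc n) a = (\<Sum>u\<in>words m (Suc n). t ^ des (a # u))"
    unfolding descent_gf_def words_from_Suc[OF assms] by (simp add: sum.reindex)
  also have "\<dots> = (\<Sum>u\<in>words m (Suc n). descent_weight t a (hd u) * t ^ des u)"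
    by (intro sum.cong refl)
      (auto simp: words_def length_Suc_conv des_Cons_Cons descent_weight_def power_add)
  also have "\<dots> = (\<Sum>b=1..m. descent_weight t a b * descent_gf t m n b)"
    by (simp add: sum_words_by_first words_from_def descent_gf_def sum_distrib_left)
  finally show ?thesis .
qed

theorem mainTheorem17:
  fixes m n :: nat and t :: "'a :: comm_ring_1"
  assumes "m \<ge> 1" and "n \<ge> 1"
  shows "(\<Sum>w\<in>{w\<in>banners n. set (unbar w) \<subseteq> {1..m}}. t ^ bars w)
       = (\<Sum>k=0..n-1. of_nat (n - 1 choose k) * t ^ k * (\<Sum>u\<in>words m (n - k). t ^ des u))"
proof -
  obtain N where n: "n = Suc N" using assms(2) by (cases n) auto
  have expand: "banner_gf t m N a = (\<Sum>k\<le>N. of_nat (N choose k) * t ^ k * descent_gf t m (N - k) a)"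
    if "a \<in> {1..m}" for a
    by (rule binomial_transfer[where A = "{1..m}" and M = "descent_weight t"])
      (use that in \<open>simp_all add: banner_gf_0 descent_gf_0 banner_gf_Suc descent_gf_Suc\<close>)
  have "(\<Sum>w\<in>banner_set m (Suc N). t ^ bars w) = (\<Sum>a=1..m. banner_gf t m N a)"
    by (simp add: sum_banner_set_by_first banner_gf_def)
  also have "\<dots> = (\<Sum>k\<le>N. of_nat (N choose k) * t ^ k * (\<Sum>a=1..m. descent_gf t m (N - k) a))"
    by (simp add: expand sum_distrib_left sum.swap[of _ "{..N}"])
  also have "\<dots> = (\<Sum>k\<le>N. of_nat (N choose k) * t ^ k * (\<Sum>u\<in>words m (Suc N - k). t ^ des u))"
    by (intro sum.cong refl) (simp add: Suc_diff_le sum_words_by_first descent_gf_def)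
  finally show ?thesis
    unfolding n banner_set_def by (simp add: atLeast0AtMost)
qed

end
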